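(* There is a universal constant $C>0$ such that for every positive integer $T$, $x \in \{0,1\}^T$ and $p \in [0,1]^T$, there exist a set $S \subseteq [0,1]$ with $|S| \le C\sqrt{T}$ and distributions $\mathcal{D}_1,\ldots,\mathcal{D}_T$ supported on $S$ such that $\mathcal{D} = (\mathcal{D}_1,\ldots,\mathcal{D}_T) \in \underline{\mathcal{C}}(x)$ and $\|p - \mathcal{D}\|_1 \le \mathsf{LowerCalDist}(x,p) + C\sqrt{T}$.
   Context: Let $\underline{\mathcal{C}}(x)$ be the set of $T$-tuples $\mathcal{D} = (\mathcal{D}_1,\ldots,\mathcal{D}_T)$ of probability distributions, each with finite support contained in $[0,1]$, such that $\sum_{t=1}^T (x_t - \alpha)\mathcal{D}_t(\alpha) = 0$ for every $\alpha \in [0,1]$. For such $\mathcal{D}$, $\|p - \mathcal{D}\|_1 = \sum_{t=1}^T \mathbb{E}_{q_t \sim \mathcal{D}_t}|p_t - q_t|$, and $\mathsf{LowerCalDist}(x,p) = \inf_{\mathcal{D} \in \underline{\mathcal{C}}(x)} \|p - \mathcal{D}\|_1$. *)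

theory Defs
  imports "HOL-Probability.Probability"
begin

text \<open>A T-tuple of distributions is modelled as D :: nat => real pmf, indexed by t < T
  (index t corresponds to the paper's t+1). Each D t has finite support contained in [0,1].\<close>

definition lower_cal_set :: "nat \<Rightarrow> (nat \<Rightarrow> real) \<Rightarrow> (nat \<Rightarrow> real pmf) set" where
  "lower_cal_set T x = {D. (\<forall>t<T. finite (set_pmf (D t)) \<and> set_pmf (D t) \<subseteq> {0..1}) \<and>
      (\<forall>\<alpha>\<in>{0..1::real}. (\<Sum>t<T. (x t - \<alpha>) * pmf (D t) \<alpha>) = 0)}"

definition dist_l1 :: "nat \<Rightarrow> (nat \<Rightarrow> real) \<Rightarrow> (nat \<Rightarrow> real pmf) \<Rightarrow> real" where
  "dist_l1 T p D = (\<Sum>t<T. measure_pmf.expectation (D t) (\<lambda>q. \<bar>p t - q\<bar>))"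

definition LowerCalDist :: "nat \<Rightarrow> (nat \<Rightarrow> real) \<Rightarrow> (nat \<Rightarrow> real) \<Rightarrow> real" where
  "LowerCalDist T x p = (INF D \<in> lower_cal_set T x. dist_l1 T p D)"

end

theory Submission
  imports Defs
begin

(* Start from a calibrated D within sqrt T of the infimum. Cut [0,1] into the buckets
   floor (q m) = k with m = ceil (sqrt T), and move all the mass that D puts into a bucket to
   the mass-weighted mean of that bucket. Calibration says that at each point q the weighted
   average of the x t equals q; summed over a bucket, the weighted average of the x t equals
   the bucket mean, so the merged tuple is calibrated again. It lives on at most m + 1 points,
   and no mass moves by more than 1/m, which costs at most T/m <= sqrt T. *)

definition joint_support :: "nat \<Rightarrow> (nat \<Rightarrow> 'a pmf) \<Rightarrow> 'a set" where
  "joint_support T D = (\<Union>t<T. set_pmf (D t))"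

definition bucket_mass :: "nat \<Rightarrow> (nat \<Rightarrow> real pmf) \<Rightarrow> real set \<Rightarrow> real" where
  "bucket_mass T D B = (\<Sum>t<T. \<Sum>q\<in>joint_support T D \<inter> B. pmf (D t) q)"

definition bucket_mean :: "nat \<Rightarrow> (nat \<Rightarrow> real pmf) \<Rightarrow> real set \<Rightarrow> real" where
  "bucket_mean T D B =
     (\<Sum>t<T. \<Sum>q\<in>joint_support T D \<inter> B. q * pmf (D t) q) / bucket_mass T D B"

definition merge_buckets :: "nat \<Rightarrow> (nat \<Rightarrow> real pmf) \<Rightarrow> (real \<Rightarrow> 'b) \<Rightarrow> nat \<Rightarrow> real pmf" where
  "merge_buckets T D g t = map_pmf (\<lambda>q. bucket_mean T D (g -` {g q})) (D t)"

lemma set_pmf_subset_joint_support: "t < T \<Longrightarrow> set_pmf (D t) \<subseteq> joint_support T D"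
  unfolding joint_support_def by auto

lemma lower_cal_set_joint_support:
  assumes "D \<in> lower_cal_set T x"
  shows "finite (joint_support T D)" "joint_support T D \<subseteq> {0..1}"
  using assms unfolding lower_cal_set_def joint_support_def by auto

lemma pmf_map_pmf_finite_support:
  assumes "finite A" "set_pmf M \<subseteq> A"
  shows "pmf (map_pmf f M) y = (\<Sum>a\<in>{a\<in>A. f a = y}. pmf M a)"
proof -
  have "f -` {y} \<inter> set_pmf M = {a\<in>A. f a = y} \<inter> set_pmf M"
    using assms(2) by auto
  then have "measure M (f -` {y}) = measure M {a\<in>A. f a = y}"
    by (metis measure_Int_set_pmf)
  then show ?thesis
    using assms(1) by (simp add: pmf_map measure_measure_pmf_finite)
qed

lemma bucket_mass_pos:
  assumes "finite (joint_support T D)" "q\<^sub>0 \<in> joint_support T D \<inter> B"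
  shows "0 < bucket_mass T D B"
proof -
  obtain t\<^sub>0 where t\<^sub>0: "t\<^sub>0 < T" "q\<^sub>0 \<in> set_pmf (D t\<^sub>0)"
    using assms(2) unfolding joint_support_def by auto
  have "0 < pmf (D t\<^sub>0) q\<^sub>0"
    using t\<^sub>0(2) by (simp add: pmf_positive)
  also have "\<dots> \<le> (\<Sum>q\<in>joint_support T D \<inter> B. pmf (D t\<^sub>0) q)"
    using assms by (intro member_le_sum) auto
  also have "\<dots> \<le> bucket_mass T D B"
    unfolding bucket_mass_def using t\<^sub>0(1) by (intro member_le_sum sum_nonneg) auto
  finally show ?thesis .
qed

lemma bucket_mean_between:
  assumes "finite (joint_support T D)" "q\<^sub>0 \<in> joint_support T D \<inter> B"
    and bounds: "\<And>q. q \<in> joint_support T D \<inter> B \<Longrightarrow> a \<le> q \<and> q \<le> b"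
  shows "a \<le> bucket_mean T D B \<and> bucket_mean T D B \<le> b"
proof -
  let ?J = "joint_support T D \<inter> B"
  let ?Z = "\<Sum>t<T. \<Sum>q\<in>?J. q * pmf (D t) q"
  have W: "0 < bucket_mass T D B"
    using bucket_mass_pos[OF assms(1,2)] .
  have "a * bucket_mass T D B = (\<Sum>t<T. \<Sum>q\<in>?J. a * pmf (D t) q)"
    unfolding bucket_mass_def by (simp add: sum_distrib_left)
  also have "\<dots> \<le> ?Z"
    using bounds by (intro sum_mono mult_right_mono) auto
  finally have lower: "a * bucket_mass T D B \<le> ?Z" .
  have "?Z \<le> (\<Sum>t<T. \<Sum>q\<in>?J. b * pmf (D t) q)"
    using bounds by (intro sum_mono mult_right_mono) auto
  also have "\<dots> = b * bucket_mass T D B"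
    unfolding bucket_mass_def by (simp add: sum_distrib_left)
  finally have upper: "?Z \<le> b * bucket_mass T D B" .
  show ?thesis
    using lower upper W unfolding bucket_mean_def by (simp add: le_divide_eq divide_le_eq)
qed

lemma calibrated_bucket_sum:
  assumes "D \<in> lower_cal_set T x"
  shows "(\<Sum>t<T. \<Sum>q\<in>joint_support T D \<inter> B. (x t - q) * pmf (D t) q) = 0"
proof -
  have "(\<Sum>t<T. \<Sum>q\<in>joint_support T D \<inter> B. (x t - q) * pmf (D t) q)
      = (\<Sum>q\<in>joint_support T D \<inter> B. \<Sum>t<T. (x t - q) * pmf (D t) q)"
    by (rule sum.swap)
  also have "\<dots> = 0"
    using assms lower_cal_set_joint_support(2)[OF assms]
    unfolding lower_cal_set_def by (intro sum.neutral) auto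
  finally show ?thesis .
qed

lemma calibrated_bucket_mean_sum:
  assumes "D \<in> lower_cal_set T x" "0 < bucket_mass T D B"
  shows "(\<Sum>t<T. \<Sum>q\<in>joint_support T D \<inter> B. (x t - bucket_mean T D B) * pmf (D t) q) = 0"
proof -
  let ?J = "joint_support T D \<inter> B"
  have "(\<Sum>t<T. \<Sum>q\<in>?J. (x t - bucket_mean T D B) * pmf (D t) q)
      = (\<Sum>t<T. \<Sum>q\<in>?J. (x t - q) * pmf (D t) q)
        + ((\<Sum>t<T. \<Sum>q\<in>?J. q * pmf (D t) q) - bucket_mean T D B * bucket_mass T D B)"
    unfolding bucket_mass_def
    by (simp add: left_diff_distrib sum.distrib sum_subtractf sum_distrib_left)
  also have "\<dots> = 0"
    using calibrated_bucket_sum[OF assms(1)] assms(2) unfolding bucket_mean_def by simp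
  finally show ?thesis .
qed

lemma bucket_mean_displacement:
  assumes "finite (joint_support T D)" "q \<in> joint_support T D"
    and diam: "\<And>q q'. q \<in> joint_support T D \<Longrightarrow> q' \<in> joint_support T D \<Longrightarrow> g q = g q'
                 \<Longrightarrow> \<bar>q - q'\<bar> \<le> \<delta>"
  shows "\<bar>bucket_mean T D (g -` {g q}) - q\<bar> \<le> \<delta>"
proof -
  have "q - \<delta> \<le> q' \<and> q' \<le> q + \<delta>" if "q' \<in> joint_support T D \<inter> g -` {g q}" for q'
    using diam[OF assms(2), of q'] that by auto
  then have "q - \<delta> \<le> bucket_mean T D (g -` {g q}) \<and> bucket_mean T D (g -` {g q}) \<le> q + \<delta>"
    using assms(2) by (intro bucket_mean_between[OF assms(1), of q]) auto
  then show ?thesis by linarith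
qed

lemma merge_buckets_calibrated:
  assumes D: "D \<in> lower_cal_set T x"
  shows "merge_buckets T D g \<in> lower_cal_set T x"
proof -
  let ?J = "joint_support T D"
  let ?\<beta> = "\<lambda>k. bucket_mean T D (g -` {k})"
  let ?r = "\<lambda>q. ?\<beta> (g q)"
  have fin: "finite ?J" and J01: "?J \<subseteq> {0..1}"
    using lower_cal_set_joint_support[OF D] by auto
  have r01: "0 \<le> ?r q \<and> ?r q \<le> 1" if "q \<in> ?J" for q
    using J01 that by (intro bucket_mean_between[OF fin, of q]) auto
  have support: "finite (set_pmf (merge_buckets T D g t)) \<and> set_pmf (merge_buckets T D g t) \<subseteq> {0..1}"
    if "t < T" for t
  proof -
    have "set_pmf (D t) \<subseteq> ?J"
      using set_pmf_subset_joint_support[OF that] .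
    then show ?thesis
      using fin r01 by (auto simp: merge_buckets_def intro: finite_subset)
  qed
  have bucket: "(\<Sum>q\<in>{q\<in>{q\<in>?J. ?r q = y}. g q = k}. \<Sum>t<T. (x t - ?r q) * pmf (D t) q) = 0"
    if "k \<in> g ` ?J" for y k
  proof (cases "?\<beta> k = y")
    case True
    have "0 < bucket_mass T D (g -` {k})"
      using that by (auto intro: bucket_mass_pos[OF fin])
    then have "(\<Sum>q\<in>?J \<inter> g -` {k}. \<Sum>t<T. (x t - ?\<beta> k) * pmf (D t) q) = 0"
      using calibrated_bucket_mean_sum[OF D] by (subst sum.swap) simp
    moreover have "{q\<in>{q\<in>?J. ?r q = y}. g q = k} = ?J \<inter> g -` {k}"
      using True by auto
    ultimately show ?thesis
      by (auto intro!: sum.cong)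
  next
    case False
    then have "{q\<in>{q\<in>?J. ?r q = y}. g q = k} = {}"
      by auto
    then show ?thesis
      by (simp only: sum.empty)
  qed
  have "(\<Sum>t<T. (x t - y) * pmf (merge_buckets T D g t) y) = 0" for y
  proof -
    have "(\<Sum>t<T. (x t - y) * pmf (merge_buckets T D g t) y)
        = (\<Sum>t<T. \<Sum>q\<in>{q\<in>?J. ?r q = y}. (x t - ?r q) * pmf (D t) q)"
      unfolding merge_buckets_def
      by (simp add: pmf_map_pmf_finite_support[OF fin set_pmf_subset_joint_support] sum_distrib_left)
    also have "\<dots> = (\<Sum>q\<in>{q\<in>?J. ?r q = y}. \<Sum>t<T. (x t - ?r q) * pmf (D t) q)"
      by (rule sum.swap)
    also have "\<dots> = (\<Sum>k\<in>g ` ?J. \<Sum>q\<in>{q\<in>{q\<in>?J. ?r q = y}. g q = k}. \<Sum>t<T. (x t - ?r q) * pmf (D t) q)"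
      using fin by (intro sum.group[symmetric]) auto
    also have "\<dots> = 0"
      using bucket by simp
    finally show ?thesis .
  qed
  then show ?thesis
    using support unfolding lower_cal_set_def by blast
qed

lemma card_joint_support_merge_buckets:
  assumes "finite (joint_support T D)"
  shows "card (joint_support T (merge_buckets T D g)) \<le> card (g ` joint_support T D)"
proof -
  have "joint_support T (merge_buckets T D g)
      = (\<lambda>k. bucket_mean T D (g -` {k})) ` (g ` joint_support T D)"
    unfolding joint_support_def merge_buckets_def by auto
  then show ?thesis
    using assms by (simp add: card_image_le)
qed

lemma dist_l1_map_pmf_le:
  assumes fin: "\<And>t. t < T \<Longrightarrow> finite (set_pmf (D t))"
    and close: "\<And>t q. t < T \<Longrightarrow> q \<in> set_pmf (D t) \<Longrightarrow> \<bar>f q - q\<bar> \<le> \<delta>"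
  shows "dist_l1 T p (\<lambda>t. map_pmf f (D t)) \<le> dist_l1 T p D + real T * \<delta>"
proof -
  have "measure_pmf.expectation (D t) (\<lambda>q. \<bar>p t - f q\<bar>)
      \<le> measure_pmf.expectation (D t) (\<lambda>q. \<bar>p t - q\<bar>) + \<delta>" if t: "t < T" for t
  proof -
    have "measure_pmf.expectation (D t) (\<lambda>q. \<bar>p t - f q\<bar>)
        \<le> measure_pmf.expectation (D t) (\<lambda>q. \<bar>p t - q\<bar> + \<delta>)"
    proof (intro integral_mono_AE)
      show "AE q in D t. \<bar>p t - f q\<bar> \<le> \<bar>p t - q\<bar> + \<delta>"
        using close[OF t] by (auto simp: AE_measure_pmf_iff) (smt (verit) abs_triangle_ineq)
    qed (use fin[OF t] in \<open>auto simp: integrable_measure_pmf_finite\<close>)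
    also have "\<dots> = measure_pmf.expectation (D t) (\<lambda>q. \<bar>p t - q\<bar>) + \<delta>"
      using fin[OF t] by (simp add: integrable_measure_pmf_finite)
    finally show ?thesis .
  qed
  then have "dist_l1 T p (\<lambda>t. map_pmf f (D t))
      \<le> (\<Sum>t<T. measure_pmf.expectation (D t) (\<lambda>q. \<bar>p t - q\<bar>) + \<delta>)"
    unfolding dist_l1_def by (intro sum_mono) simp
  then show ?thesis
    unfolding dist_l1_def by (simp add: sum.distrib)
qed

lemma floor_bucket_diameter:
  fixes q q' :: real
  assumes "0 < m" "\<lfloor>q * m\<rfloor> = \<lfloor>q' * m\<rfloor>"
  shows "\<bar>q - q'\<bar> \<le> 1 / m"
proof -
  have "\<bar>q * m - q' * m\<bar> \<le> 1"
    using assms(2) by linarith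
  then show ?thesis
    using assms(1) by (simp add: le_divide_eq abs_mult flip: left_diff_distrib)
qed

lemma calibrated_rounding:
  assumes D: "D \<in> lower_cal_set T x" and m: "0 < m"
  shows "\<exists>D'\<in>lower_cal_set T x. card (joint_support T D') \<le> m + 1
           \<and> dist_l1 T p D' \<le> dist_l1 T p D + real T / real m"
proof -
  let ?J = "joint_support T D"
  let ?g = "\<lambda>q. \<lfloor>q * real m\<rfloor>"
  let ?D' = "merge_buckets T D ?g"
  have fin: "finite ?J" and J01: "?J \<subseteq> {0..1}"
    using lower_cal_set_joint_support[OF D] by auto
  have "?g ` ?J \<subseteq> {0..int m}"
  proof
    fix k assume "k \<in> ?g ` ?J"
    then obtain q where q: "q \<in> {0..1}" "k = ?g q"
      using J01 by auto
    then have "?g q \<le> \<lfloor>real m\<rfloor>"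
      by (intro floor_mono) (simp add: mult_left_le_one_le)
    then show "k \<in> {0..int m}"
      using q by simp
  qed
  then have "card (?g ` ?J) \<le> card {0..int m}"
    by (intro card_mono) auto
  then have card: "card (joint_support T ?D') \<le> m + 1"
    using card_joint_support_merge_buckets[OF fin, of ?g] by simp
  have diam: "\<bar>q - q'\<bar> \<le> 1 / real m" if "?g q = ?g q'" for q q'
    using floor_bucket_diameter[of "real m" q q'] m that by simp
  have "\<bar>bucket_mean T D (?g -` {?g q}) - q\<bar> \<le> 1 / real m" if "q \<in> ?J" for q
    using bucket_mean_displacement[OF fin that, of ?g] diam by blast
  then have "dist_l1 T p ?D' \<le> dist_l1 T p D + real T * (1 / real m)"
    unfolding merge_buckets_def using fin set_pmf_subset_joint_support[of _ T D]
    by (intro dist_l1_map_pmf_le) (auto intro: finite_subset)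
  then show ?thesis
    using merge_buckets_calibrated[OF D, of ?g] card by auto
qed

lemma lower_cal_set_nonempty:
  assumes "0 < T" "\<And>t. t < T \<Longrightarrow> x t \<in> {0..1}"
  shows "lower_cal_set T x \<noteq> {}"
proof -
  define c where "c = (\<Sum>t<T. x t) / real T"
  have "0 \<le> c"
    unfolding c_def using assms(2) by (auto intro!: divide_nonneg_nonneg sum_nonneg)
  moreover have "(\<Sum>t<T. x t) \<le> (\<Sum>t<T. 1)"
    using assms(2) by (intro sum_mono) auto
  then have "c \<le> 1"
    unfolding c_def using assms(1) by simp
  moreover have "(\<Sum>t<T. x t - c) = 0"
    unfolding c_def using assms(1) by (simp add: sum_subtractf)
  ultimately have "(\<lambda>_. return_pmf c) \<in> lower_cal_set T x"
    unfolding lower_cal_set_def by (auto simp: pmf_return indicator_def sum_distrib_right)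
  then show ?thesis by blast
qed

lemma LowerCalDist_approx:
  assumes "lower_cal_set T x \<noteq> {}" "0 < \<epsilon>"
  shows "\<exists>D\<in>lower_cal_set T x. dist_l1 T p D < LowerCalDist T x p + \<epsilon>"
proof -
  have "bdd_below (dist_l1 T p ` lower_cal_set T x)"
    unfolding dist_l1_def by (intro bdd_belowI[of _ 0]) (auto intro!: sum_nonneg integral_nonneg)
  then show ?thesis
    using assms cINF_less_iff[of "lower_cal_set T x" "dist_l1 T p"]
    unfolding LowerCalDist_def by (metis less_add_same_cancel1)
qed

lemma ceiling_sqrt_bounds:
  assumes "0 < T"
  defines "m \<equiv> nat \<lceil>sqrt (real T)\<rceil>"
  shows "0 < m" "real m + 1 \<le> 3 * sqrt (real T)" "real T / real m \<le> sqrt (real T)"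
proof -
  have sqrtT: "1 \<le> sqrt (real T)"
    using assms(1) by simp
  have "real m = real_of_int \<lceil>sqrt (real T)\<rceil>"
    unfolding m_def by simp
  then have m: "sqrt (real T) \<le> real m" "real m \<le> sqrt (real T) + 1"
    by linarith+
  then show "real m + 1 \<le> 3 * sqrt (real T)"
    using sqrtT by linarith
  have "0 < real m"
    using m sqrtT by linarith
  then show "0 < m"
    by simp
  have "real T / real m \<le> real T / sqrt (real T)"
    using m sqrtT \<open>0 < real m\<close> by (intro divide_left_mono) auto
  also have "\<dots> = sqrt (real T)"
    by (rule real_div_sqrt) simp
  finally show "real T / real m \<le> sqrt (real T)" .
qed

lemma calibrated_small_support_near_LowerCalDist:
  assumes T: "0 < T" and x01: "\<And>t. t < T \<Longrightarrow> x t \<in> {0..1}"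
  shows "\<exists>D\<in>lower_cal_set T x. real (card (joint_support T D)) \<le> 3 * sqrt (real T)
           \<and> dist_l1 T p D \<le> LowerCalDist T x p + 2 * sqrt (real T)"
proof -
  define m where "m = nat \<lceil>sqrt (real T)\<rceil>"
  note m = ceiling_sqrt_bounds[OF T, folded m_def]
  obtain D where D: "D \<in> lower_cal_set T x"
    and D_opt: "dist_l1 T p D < LowerCalDist T x p + sqrt (real T)"
    using LowerCalDist_approx[OF lower_cal_set_nonempty[of T x, OF T x01], of "sqrt (real T)" p] T
    by auto
  obtain D' where D': "D' \<in> lower_cal_set T x"
    and card: "card (joint_support T D') \<le> m + 1"
    and cost: "dist_l1 T p D' \<le> dist_l1 T p D + real T / real m"
    using calibrated_rounding[OF D m(1), of p] by blast
  have "real (card (joint_support T D')) \<le> 3 * sqrt (real T)"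
    using of_nat_mono[OF card, where 'a=real] m(2) by simp
  moreover have "dist_l1 T p D' \<le> LowerCalDist T x p + 2 * sqrt (real T)"
    using D_opt cost m(3) by linarith
  ultimately show ?thesis
    using D' by blast
qed

theorem lemma3:
  "\<exists>C>0::real. \<forall>(T::nat) (x::nat \<Rightarrow> real) (p::nat \<Rightarrow> real).
     T > 0 \<longrightarrow> (\<forall>t<T. x t \<in> {0, 1}) \<longrightarrow> (\<forall>t<T. p t \<in> {0..1}) \<longrightarrow>
     (\<exists>(S::real set) (D::nat \<Rightarrow> real pmf).
        S \<subseteq> {0..1} \<and> finite S \<and> real (card S) \<le> C * sqrt (real T) \<and>
        (\<forall>t<T. set_pmf (D t) \<subseteq> S) \<and>
        D \<in> lower_cal_set T x \<and>
        dist_l1 T p D \<le> LowerCalDist T x p + C * sqrt (real T))"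
proof (intro exI[of _ 3] conjI allI impI)
  fix T :: nat and x p :: "nat \<Rightarrow> real"
  assume T: "T > 0" and "\<forall>t<T. x t \<in> {0, 1}"
  then have "x t \<in> {0..1}" if "t < T" for t
    using that by auto
  then obtain D where D: "D \<in> lower_cal_set T x"
    and card: "real (card (joint_support T D)) \<le> 3 * sqrt (real T)"
    and cost: "dist_l1 T p D \<le> LowerCalDist T x p + 2 * sqrt (real T)"
    using calibrated_small_support_near_LowerCalDist[of T x p, OF T] by blast
  then show "\<exists>S D. S \<subseteq> {0..1} \<and> finite S \<and> real (card S) \<le> 3 * sqrt (real T) \<and>
      (\<forall>t<T. set_pmf (D t) \<subseteq> S) \<and> D \<in> lower_cal_set T x \<and>
      dist_l1 T p D \<le> LowerCalDist T x p + 3 * sqrt (real T)"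
    using lower_cal_set_joint_support[OF D] set_pmf_subset_joint_support[of _ T D]
    by (intro exI[of _ "joint_support T D"] exI[of _ D]) auto
qed simp

end
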